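(* Under the standing assumptions in the context, for any fixed $\mu>0$ and $h\ge0$, the RDE-CUSUM policy $\bar\Psi_{\mathrm{RDC}}(A,\mu,h)$ (defined in the context) satisfies $$\sup_{G\in\mathcal{G}}\mathsf{WADD}^{G}(\bar\Psi_{\mathrm{RDC}}(A,\mu,h))\ \le\ \frac{A}{D_{KL}(\bar g\,\|\,f)}\,(1+o(1)),$$ where the $o(1)$ term goes to zero as $A\to\infty$.
   Context: Observation model: a sequence $\{X_n\}_{n\ge1}$, conditionally independent given an unknown deterministic change point $\nu\in\{1,2,\dots\}\cup\{\infty\}$, with $X_n$ having density $f$ for $n<\nu$ and density $g$ (distribution $G$) for $n\ge\nu$, where $G$ is unknown but belongs to a known family $\mathcal{G}$. $\mathsf{P}^G_k,\mathsf{E}^G_k$ denote probability and expectation when $\nu=k$ with post-change law $G$. Policies: $M_n\in\{0,1\}$ indicates whether $X_n$ is used; information $\mathscr{I}_n=[M_1,\dots,M_n,X_1^{(M_1)},\dots,X_n^{(M_n)}]$ with $X_i^{(M_i)}=X_i$ if $M_i=1$ and absent otherwise ($\mathscr{I}_0=\emptyset$); $\tau$ is a stopping time for the filtration generated by $\{\mathscr{I}_n\}$. $\mathsf{WADD}^G(\Psi)=\sup_{k\ge1}\operatorname{ess\,sup}\mathsf{E}^G_k[(\tau-k+1)^+\mid\mathscr{I}_{k-1}]$. Least favorable law: $\bar G\in\mathcal{G}$ with density $\bar g$ such that for every $G\in\mathcal{G}$ and all $t\in\mathbb{R}$, $\mathsf{P}_{X\sim G}(\log(\bar g(X)/f(X))\ge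 t)\ge\mathsf{P}_{X\sim\bar G}(\log(\bar g(X)/f(X))\ge t)$. Standing assumptions: such $\bar g$ exists, and all likelihood ratios involved are continuous with finite positive moments up to second order. $D_{KL}(\bar g\|f)=\int\bar g(x)\log\frac{\bar g(x)}{f(x)}dx$. RDE-CUSUM policy $\bar\Psi_{\mathrm{RDC}}(A,\mu,h)$, with $A>0$, $\mu>0$, $h\ge0$: set $\bar D_0=0$. For $n\ge0$: $\bar M_{n+1}=1$ if $\bar D_n\ge0$ and $\bar M_{n+1}=0$ if $\bar D_n<0$. If $\bar M_{n+1}=1$ then $\bar D_{n+1}=\max\{\bar D_n+\log(\bar g(X_{n+1})/f(X_{n+1})),\,-h\}$; if $\bar M_{n+1}=0$ then $\bar D_{n+1}=\min\{\bar D_n+\mu,0\}$. Stop at $\bar\tau_{\mathrm{rdc}}=\inf\{n\ge1:\bar D_n\ge A\}$. *)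

theory Defs
  imports "HOL-Probability.Probability"
begin

text \<open>Observations: a sample path is a function x :: nat => real, with
  X_n = x (n - 1) for n >= 1 (i.e. x i is the (i+1)-th observation).\<close>

definition llr :: "(real \<Rightarrow> real) \<Rightarrow> (real \<Rightarrow> real) \<Rightarrow> real \<Rightarrow> real" where
  "llr gb f x = ln (gb x / f x)"

definition law :: "(real \<Rightarrow> real) \<Rightarrow> real measure" where
  "law g = density lborel (\<lambda>x. ennreal (g x))"

definition is_density :: "(real \<Rightarrow> real) \<Rightarrow> bool" where
  "is_density g \<longleftrightarrow> g \<in> borel_measurable borel \<and> (\<forall>x. 0 \<le> g x)
      \<and> (\<integral>\<^sup>+ x. ennreal (g x) \<partial>lborel) = 1"

text \<open>The RDE-CUSUM statistic: rdc_D gb f mu h x n = Dbar_n.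
  Sampling decision: Mbar_{n+1} = 1 iff Dbar_n >= 0; X_{n+1} = x n.\<close>
fun rdc_D :: "(real \<Rightarrow> real) \<Rightarrow> (real \<Rightarrow> real) \<Rightarrow> real \<Rightarrow> real \<Rightarrow> (nat \<Rightarrow> real) \<Rightarrow> nat \<Rightarrow> real" where
  "rdc_D gb f mu h x 0 = 0"
| "rdc_D gb f mu h x (Suc n) =
     (if rdc_D gb f mu h x n \<ge> 0
      then max (rdc_D gb f mu h x n + llr gb f (x n)) (- h)
      else min (rdc_D gb f mu h x n + mu) 0)"

text \<open>M_{n+1} (for n >= 0), as a boolean.\<close>
definition rdc_M :: "(real \<Rightarrow> real) \<Rightarrow> (real \<Rightarrow> real) \<Rightarrow> real \<Rightarrow> real \<Rightarrow> (nat \<Rightarrow> real) \<Rightarrow> nat \<Rightarrow> bool" where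
  "rdc_M gb f mu h x n \<longleftrightarrow> rdc_D gb f mu h x n \<ge> 0"

definition rdc_tau :: "(real \<Rightarrow> real) \<Rightarrow> (real \<Rightarrow> real) \<Rightarrow> real \<Rightarrow> real \<Rightarrow> real \<Rightarrow> (nat \<Rightarrow> real) \<Rightarrow> enat" where
  "rdc_tau gb f A mu h x =
     (if \<exists>n\<ge>1. rdc_D gb f mu h x n \<ge> A
      then enat (LEAST n. n \<ge> 1 \<and> rdc_D gb f mu h x n \<ge> A) else \<infinity>)"

definition delay :: "enat \<Rightarrow> nat \<Rightarrow> ennreal" where
  "delay t k = (case t of enat n \<Rightarrow> of_nat (n + 1 - k) | \<infinity> \<Rightarrow> \<infinity>)"

text \<open>P_k^G: change point nu = k, X_n ~ f for n < k and X_n ~ g for n >= k.\<close>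
definition Pk :: "(real \<Rightarrow> real) \<Rightarrow> (real \<Rightarrow> real) \<Rightarrow> nat \<Rightarrow> (nat \<Rightarrow> real) measure" where
  "Pk f g k = PiM UNIV (\<lambda>i. if i + 1 < k then law f else law g)"

text \<open>Information I_m = [M_1..M_m, X_i^{(M_i)}, i <= m], encoded as the map
  x |-> (lambda i. if i < m then (M_{i+1}, if M_{i+1} then X_{i+1} else 0) else (False, 0)).\<close>
definition info_space :: "(nat \<Rightarrow> bool \<times> real) measure" where
  "info_space = PiM UNIV (\<lambda>_. count_space UNIV \<Otimes>\<^sub>M borel)"

definition rdc_info :: "(real \<Rightarrow> real) \<Rightarrow> (real \<Rightarrow> real) \<Rightarrow> real \<Rightarrow> real \<Rightarrow> nat \<Rightarrow> (nat \<Rightarrow> real) \<Rightarrow> nat \<Rightarrow> bool \<times> real" where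
  "rdc_info gb f mu h m x = (\<lambda>i. if i < m
       then (rdc_M gb f mu h x i, if rdc_M gb f mu h x i then x i else 0) else (False, 0))"

definition info_alg :: "(nat \<Rightarrow> real) measure \<Rightarrow> (real \<Rightarrow> real) \<Rightarrow> (real \<Rightarrow> real) \<Rightarrow> real \<Rightarrow> real \<Rightarrow> nat \<Rightarrow> (nat \<Rightarrow> real) measure" where
  "info_alg P gb f mu h m = vimage_algebra (space P) (rdc_info gb f mu h m) info_space"

definition WADD_rdc :: "(real \<Rightarrow> real) \<Rightarrow> (real \<Rightarrow> real) \<Rightarrow> (real \<Rightarrow> real) \<Rightarrow> real \<Rightarrow> real \<Rightarrow> real \<Rightarrow> ennreal" where
  "WADD_rdc f gb g A mu h =
     (SUP k\<in>{1..}. esssup (Pk f g k)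
        (nn_cond_exp (Pk f g k) (info_alg (Pk f g k) gb f mu h (k - 1))
           (\<lambda>x. delay (rdc_tau gb f A mu h x) k)))"

end

(* Fix a post-change law g and a change point k.  From time k on, the statistic D_n is a
   Markov chain driven by i.i.d. samples of law g, and we use a bounded Lyapunov function V of D:
   D/a - gam ((B - D)_+)^2 on [0, A + L], and on the skipping regime [-h, 0) a function rising by
   one per skipped sample.  While D stays below A, V increases by at least one per step in
   expectation, so telescoping bounds the expected detection delay, conditionally on any event
   observable before k, by the range (A + L)/a + gam B^2 + 1 + h/mu of V.  The drift under g is
   reduced to moments of the log-likelihood ratio under gb: by the least-favourable property the
   llr is stochastically smaller under gb than under g.  Taking a just below D_KL(gb||f) and
   gam, B, L suitably, the range is at most A/D_KL(gb||f) (1 + eps) for large A. *)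

theory Submission
  imports Defs
begin

section \<open>Drift bounds on infinite product spaces\<close>

lemma PiM_integral_component_fiber:
  fixes M :: "nat \<Rightarrow> 'a measure" and H :: "(nat \<Rightarrow> 'a) \<Rightarrow> 'a \<Rightarrow> real"
  assumes prob: "\<And>i. prob_space (M i)"
    and H_meas: "(\<lambda>(y, X). H X y) \<in> borel_measurable (M n \<Otimes>\<^sub>M PiM UNIV M)"
    and H_bounded: "\<And>X y. \<bar>H X y\<bar> \<le> B"
    and H_prefix: "\<And>X X' y. (\<forall>i<n. X i = X' i) \<Longrightarrow> H X y = H X' y"
  shows "(\<integral>X. H X (X n) \<partial>PiM UNIV M) = (\<integral>X. (\<integral>y. H X y \<partial>M n) \<partial>PiM UNIV M)"
    and "integrable (PiM UNIV M) (\<lambda>X. \<integral>y. H X y \<partial>M n)"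
proof -
  let ?P = "PiM UNIV M"
  interpret P: prob_space ?P by (intro prob_space_PiM prob)
  interpret Mn: prob_space "M n" by (rule prob)
  interpret pp: pair_prob_space "M n" ?P by unfold_locales
  have H_int: "integrable (M n \<Otimes>\<^sub>M ?P) (\<lambda>(y, X). H X y)"
    using H_meas H_bounded
    by (intro pp.integrable_const_bound[where B=B] AE_I2) (auto split: prod.splits)
  then show "integrable ?P (\<lambda>X. \<integral>y. H X y \<partial>M n)"
    using pp.integrable_snd[of "\<lambda>y X. H X y"] by simp
  have insert: "distr (M n \<Otimes>\<^sub>M ?P) ?P (\<lambda>(y, X). X(n := y)) = ?P"
    using distr_pair_PiM_eq_PiM[of UNIV M n] prob by (simp only: insert_UNIV)
  have insert_meas: "(\<lambda>(y, X). X(n := y)) \<in> (M n \<Otimes>\<^sub>M ?P) \<rightarrow>\<^sub>M ?P"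
  proof -
    have "(\<lambda>z i. (\<lambda>(y, X). if i = n then y else X i) z) \<in> (M n \<Otimes>\<^sub>M ?P) \<rightarrow>\<^sub>M ?P"
    proof (rule measurable_PiM_single')
      fix i
      show "(\<lambda>(y, X). if i = n then y else X i) \<in> (M n \<Otimes>\<^sub>M ?P) \<rightarrow>\<^sub>M M i"
        by (cases "i = n") (simp_all add: measurable_component_singleton split_beta')
    qed (auto simp: space_pair_measure space_PiM)
    moreover have "(\<lambda>z i. (\<lambda>(y, X). if i = n then y else X i) z) = (\<lambda>(y, X). X(n := y))"
      by (auto simp: fun_eq_iff)
    ultimately show ?thesis by metis
  qed
  have "(\<lambda>X. (X n, X)) \<in> ?P \<rightarrow>\<^sub>M (M n \<Otimes>\<^sub>M ?P)"
    by (intro measurable_Pair measurable_component_singleton measurable_ident_sets) auto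
  from measurable_comp[OF this H_meas]
  have diag_meas: "(\<lambda>X. H X (X n)) \<in> borel_measurable ?P" by (simp add: comp_def)
  have "(\<integral>X. H X (X n) \<partial>?P) = (\<integral>z. H ((\<lambda>(y, X). X(n := y)) z) (((\<lambda>(y, X). X(n := y)) z) n) \<partial>(M n \<Otimes>\<^sub>M ?P))"
    by (subst insert[symmetric]) (rule integral_distr[OF insert_meas diag_meas])
  also have "\<dots> = (\<integral>z. (\<lambda>(y, X). H X y) z \<partial>(M n \<Otimes>\<^sub>M ?P))"
    by (intro Bochner_Integration.integral_cong refl) (auto intro!: H_prefix)
  also have "\<dots> = (\<integral>X. (\<integral>y. H X y \<partial>M n) \<partial>?P)"
    using pp.integral_snd[of "\<lambda>y X. H X y", OF H_int] by simp
  finally show "(\<integral>X. H X (X n) \<partial>?P) = (\<integral>X. (\<integral>y. H X y \<partial>M n) \<partial>?P)" .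
qed

lemma sum_if_telescope_le:
  fixes Z :: "nat \<Rightarrow> real" and alive :: "nat \<Rightarrow> bool"
  assumes alive_Suc: "\<And>n. alive (Suc n) \<Longrightarrow> alive n"
    and Z_bounds: "\<And>n. lo \<le> Z n" "\<And>n. Z n \<le> hi"
  shows "(\<Sum>n\<in>{j..<K}. if alive n then Z (Suc n) - Z n else 0) \<le> hi - lo"
proof (cases "j \<le> K")
  case True
  let ?S = "\<lambda>K. \<Sum>n\<in>{j..<K}. if alive n then Z (Suc n) - Z n else 0"
  have "(\<exists>p. ?S K = Z p - Z j) \<and> (alive K \<longrightarrow> ?S K = Z K - Z j)"
    using True
  proof (induction K rule: nat_induct_at_least)
    case base
    then show ?case by auto
  next
    case (Suc K)
    then show ?case
      using alive_Suc[of K] by (cases "alive K") auto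
  qed
  then obtain p where "?S K = Z p - Z j"
    by (elim conjE exE)
  then show ?thesis
    using Z_bounds[of p] Z_bounds[of j] by linarith
next
  case False
  then show ?thesis
    using Z_bounds[of 0] by simp
qed

definition prefix_determined :: "nat \<Rightarrow> (nat \<Rightarrow> 'a) set \<Rightarrow> bool" where
  "prefix_determined j E \<longleftrightarrow> (\<forall>x x'. (\<forall>i<j. x i = x' i) \<longrightarrow> (x \<in> E \<longleftrightarrow> x' \<in> E))"

locale product_drift =
  fixes M :: "nat \<Rightarrow> 'a measure" and N :: "'a measure" and j0 :: nat
    and D :: "(nat \<Rightarrow> 'a) \<Rightarrow> nat \<Rightarrow> real" and T :: "real \<Rightarrow> 'a \<Rightarrow> real"
    and V :: "real \<Rightarrow> real" and lo hi :: real and R :: "real set"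
  assumes prob_space_M: "\<And>i. prob_space (M i)"
    and M_eq: "\<And>i. j0 \<le> i \<Longrightarrow> M i = N"
    and measurable_D [measurable]: "\<And>n. (\<lambda>x. D x n) \<in> borel_measurable (PiM UNIV M)"
    and D_prefix: "\<And>x x' n. (\<forall>i<n. x i = x' i) \<Longrightarrow> D x n = D x' n"
    and D_Suc: "\<And>x n. D x (Suc n) = T (D x n) (x n)"
    and measurable_T: "(\<lambda>(d, y). T d y) \<in> borel_measurable (borel \<Otimes>\<^sub>M N)"
    and measurable_V [measurable]: "V \<in> borel_measurable borel"
    and V_bounds: "\<And>d. lo \<le> V d" "\<And>d. V d \<le> hi"
    and sets_R [measurable]: "R \<in> sets borel"
    and drift: "\<And>d. d \<in> R \<Longrightarrow> V d + 1 \<le> (\<integral>y. V (T d y) \<partial>N)"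
begin

abbreviation "P \<equiv> PiM UNIV M"

definition sojourn :: "nat \<Rightarrow> (nat \<Rightarrow> 'a) set" where
  "sojourn n = {x. \<forall>m\<le>n. D x m \<in> R}"

lemma prob_space_P: "prob_space P"
  by (intro prob_space_PiM prob_space_M)

lemma sets_Int_sojourn [measurable]:
  assumes [measurable]: "E \<in> sets P"
  shows "E \<inter> sojourn n \<in> sets P"
proof -
  have "E \<inter> sojourn n = E \<inter> {x \<in> space P. \<forall>m\<in>{..n}. D x m \<in> R}"
    using sets.sets_into_space[OF assms] by (auto simp: sojourn_def)
  also have "\<dots> \<in> sets P" by measurable
  finally show ?thesis .
qed

lemma sojourn_Suc: "x \<in> sojourn (Suc n) \<Longrightarrow> x \<in> sojourn n"
  by (simp add: sojourn_def)

lemma sojourn_prefix: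
  assumes "\<forall>i<n. x i = x' i"
  shows "x \<in> sojourn n \<longleftrightarrow> x' \<in> sojourn n"
proof -
  have "D x m = D x' m" if "m \<le> n" for m
    using assms that by (intro D_prefix) auto
  then show ?thesis
    by (auto simp: sojourn_def)
qed

lemma lo_le_hi: "lo \<le> hi"
  using V_bounds[of 0] by linarith

lemma integrable_indicator_times_bounded:
  fixes f :: "(nat \<Rightarrow> 'a) \<Rightarrow> real"
  assumes [measurable]: "S \<in> sets P" "f \<in> borel_measurable P" and "\<And>x. \<bar>f x\<bar> \<le> K"
  shows "integrable P (\<lambda>x. indicator S x * f x)"
proof -
  interpret P: prob_space P by (rule prob_space_P)
  show ?thesis
    using assms(3) by (intro P.integrable_const_bound[where B=K] AE_I2)
      (auto simp: indicator_def abs_mult intro: order.trans[OF _ assms(3)])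
qed

lemma drift_step:
  assumes n: "j0 \<le> n" and E [measurable]: "E \<in> sets P" and E_prefix: "prefix_determined j0 E"
  shows "measure P (E \<inter> sojourn n)
     \<le> (\<integral>x. indicator (E \<inter> sojourn n) x * (V (D x (Suc n)) - V (D x n)) \<partial>P)"
proof -
  let ?I = "indicator (E \<inter> sojourn n) :: (nat \<Rightarrow> 'a) \<Rightarrow> real"
  define H where "H X y = ?I X * V (T (D X n) y)" for X y
  have Mn: "M n = N" by (rule M_eq[OF n])
  have K: "\<bar>V d\<bar> \<le> max \<bar>lo\<bar> \<bar>hi\<bar>" for d
    using V_bounds[of d] by linarith
  have "(\<lambda>z. (D (snd z) n, fst z)) \<in> (N \<Otimes>\<^sub>M P) \<rightarrow>\<^sub>M (borel \<Otimes>\<^sub>M N)"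
    by measurable
  from measurable_comp[OF this measurable_T]
  have [measurable]: "(\<lambda>z. T (D (snd z) n) (fst z)) \<in> borel_measurable (N \<Otimes>\<^sub>M P)"
    by (simp add: comp_def)
  have H_meas: "(\<lambda>(y, X). H X y) \<in> borel_measurable (M n \<Otimes>\<^sub>M P)"
    unfolding Mn H_def split_beta' by measurable
  have H_bounded: "\<bar>H X y\<bar> \<le> max \<bar>lo\<bar> \<bar>hi\<bar>" for X y
    using K[of "T (D X n) y"] by (auto simp: H_def indicator_def)
  have H_prefix: "H X y = H X' y" if "\<forall>i<n. X i = X' i" for X X' y
  proof -
    have "X \<in> E \<longleftrightarrow> X' \<in> E"
      using E_prefix that n by (auto simp: prefix_determined_def)
    then show ?thesis
      using sojourn_prefix[OF that] D_prefix[OF that] by (simp add: H_def indicator_def)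
  qed
  note fiber = PiM_integral_component_fiber[OF prob_space_M H_meas H_bounded H_prefix]
  have lower: "?I X * (V (D X n) + 1) \<le> (\<integral>y. H X y \<partial>N)" for X
  proof (cases "X \<in> E \<inter> sojourn n")
    case True
    then have "D X n \<in> R" by (simp add: sojourn_def)
    then show ?thesis
      using True drift by (simp add: H_def)
  qed (simp add: H_def)
  have int_I: "integrable P (\<lambda>x. ?I x * V (D x m))" for m
    by (rule integrable_indicator_times_bounded[OF _ _ K]) measurable
  have int_ind: "integrable P (\<lambda>x. ?I x * 1)"
    by (rule integrable_indicator_times_bounded[where K=1]) auto
  have "(\<integral>x. ?I x * V (D x n) \<partial>P) + measure P (E \<inter> sojourn n) = (\<integral>x. ?I x * (V (D x n) + 1) \<partial>P)"
    using int_I[of n] int_ind by (simp add: distrib_left)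
  also have "\<dots> \<le> (\<integral>x. (\<integral>y. H x y \<partial>N) \<partial>P)"
    using int_I[of n] int_ind fiber(2) lower unfolding Mn
    by (intro integral_mono) (auto simp: distrib_left)
  also have "\<dots> = (\<integral>x. ?I x * V (D x (Suc n)) \<partial>P)"
    using fiber(1) by (simp add: Mn H_def D_Suc)
  finally show ?thesis
    using int_I[of n] int_I[of "Suc n"] by (simp add: right_diff_distrib)
qed

lemma sojourn_sum_le:
  assumes E [measurable]: "E \<in> sets P" and E_prefix: "prefix_determined j0 E"
  shows "(\<Sum>n\<in>{j0..<K}. measure P (E \<inter> sojourn n)) \<le> (hi - lo) * measure P E"
proof -
  let ?T = "\<lambda>n x. indicator (E \<inter> sojourn n) x * (V (D x (Suc n)) - V (D x n)) :: real"
  have int_T: "integrable P (?T n)" for n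
  proof (rule integrable_indicator_times_bounded[where K="hi - lo"])
    show "\<bar>V (D x (Suc n)) - V (D x n)\<bar> \<le> hi - lo" for x
      using V_bounds[of "D x n"] V_bounds[of "D x (Suc n)"] by linarith
  qed measurable
  have telescope: "(\<Sum>n\<in>{j0..<K}. ?T n x) \<le> indicator E x * (hi - lo)" for x
  proof (cases "x \<in> E")
    case True
    then have "(\<Sum>n\<in>{j0..<K}. ?T n x)
        = (\<Sum>n\<in>{j0..<K}. if x \<in> sojourn n then V (D x (Suc n)) - V (D x n) else 0)"
      by (intro sum.cong) (auto simp: indicator_def)
    also have "\<dots> \<le> hi - lo"
      by (rule sum_if_telescope_le) (use sojourn_Suc V_bounds in auto)
    finally show ?thesis using True by simp
  qed (simp add: indicator_def)
  have "(\<Sum>n\<in>{j0..<K}. measure P (E \<inter> sojourn n)) \<le> (\<Sum>n\<in>{j0..<K}. \<integral>x. ?T n x \<partial>P)"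
    by (intro sum_mono drift_step E E_prefix) auto
  also have "\<dots> = (\<integral>x. (\<Sum>n\<in>{j0..<K}. ?T n x) \<partial>P)"
    by (rule Bochner_Integration.integral_sum[symmetric]) (rule int_T)
  also have "\<dots> \<le> (\<integral>x. indicator E x * (hi - lo) \<partial>P)"
  proof (rule integral_mono[OF _ _ telescope])
    show "integrable P (\<lambda>x. \<Sum>n\<in>{j0..<K}. ?T n x)"
      using int_T by (rule Bochner_Integration.integrable_sum)
    show "integrable P (\<lambda>x. indicator E x * (hi - lo))"
      by (rule integrable_indicator_times_bounded[where K="hi - lo"]) (use lo_le_hi in auto)
  qed
  also have "\<dots> = (hi - lo) * measure P E"
    by simp
  finally show ?thesis .
qed

lemma nn_integral_sojourn_count_le:
  assumes E [measurable]: "E \<in> sets P" and E_prefix: "prefix_determined j0 E"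
  shows "(\<integral>\<^sup>+x. indicator E x * (\<Sum>n. if j0 \<le> n \<and> x \<in> sojourn n then 1 else 0) \<partial>P)
    \<le> ennreal ((hi - lo) * measure P E)"
proof -
  interpret P: prob_space P by (rule prob_space_P)
  define S where "S n = (if j0 \<le> n then E \<inter> sojourn n else {})" for n
  have S_sets [measurable]: "S n \<in> sets P" for n
    by (simp add: S_def)
  have "(\<lambda>n. indicator (S n) x :: ennreal)
      = (\<lambda>n. indicator E x * (if j0 \<le> n \<and> x \<in> sojourn n then 1 else 0))" for x
    by (auto simp: S_def indicator_def fun_eq_iff)
  then have "indicator E x * (\<Sum>n. if j0 \<le> n \<and> x \<in> sojourn n then 1 else 0)
      = (\<Sum>n. indicator (S n) x :: ennreal)" for x
    by simp
  then have "(\<integral>\<^sup>+x. indicator E x * (\<Sum>n. if j0 \<le> n \<and> x \<in> sojourn n then 1 else 0) \<partial>P)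
      = (\<Sum>n. emeasure P (S n))"
    by (simp add: nn_integral_suminf)
  also have "\<dots> \<le> ennreal ((hi - lo) * measure P E)"
  proof (rule suminf_le_const)
    fix K
    have "(\<Sum>n<K. measure P (S n)) = (\<Sum>n\<in>{j0..<K}. measure P (E \<inter> sojourn n))"
      by (rule sum.mono_neutral_cong_right) (auto simp: S_def)
    then have "(\<Sum>n<K. measure P (S n)) \<le> (hi - lo) * measure P E"
      using sojourn_sum_le[OF E E_prefix] by simp
    then show "(\<Sum>n<K. emeasure P (S n)) \<le> ennreal ((hi - lo) * measure P E)"
      by (simp add: P.emeasure_eq_measure sum_ennreal ennreal_leI)
  qed (rule summableI)
  finally show ?thesis .
qed

end

section \<open>Conditional expectations bounded on average\<close>

lemma (in sigma_finite_subalgebra) AE_nn_cond_exp_le_const: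
  assumes "finite_measure M" and Y [measurable]: "Y \<in> borel_measurable M"
    and bound: "\<And>E. E \<in> sets F \<Longrightarrow> (\<integral>\<^sup>+x. indicator E x * Y x \<partial>M) \<le> ennreal c * emeasure M E"
  shows "AE x in M. nn_cond_exp M F Y x \<le> ennreal c"
proof -
  interpret finite_measure M by fact
  let ?Z = "nn_cond_exp M F Y"
  have [measurable]: "?Z \<in> borel_measurable F"
    by simp
  define E where "E = {x \<in> space M. ennreal c < ?Z x}"
  have space_F: "space F = space M"
    using subalg by (simp add: subalgebra_def)
  have E_F: "E \<in> sets F"
  proof -
    have "{x \<in> space F. ennreal c < ?Z x} \<in> sets F" by measurable
    then show ?thesis by (simp add: E_def space_F)
  qed
  have E_M [measurable]: "E \<in> sets M"
    using E_F subalg by (auto simp: subalgebra_def)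
  then have const_int: "(\<integral>\<^sup>+x. ennreal c * indicator E x \<partial>M) = ennreal c * emeasure M E"
    by (rule nn_integral_cmult_indicator)
  have "AE x in M. indicator E x * ?Z x \<le> ennreal c * indicator E x"
  proof (rule ccontr)
    assume not_AE: "\<not> (AE x in M. indicator E x * ?Z x \<le> ennreal c * indicator E x)"
    have "(\<integral>\<^sup>+x. ennreal c * indicator E x \<partial>M) < (\<integral>\<^sup>+x. indicator E x * ?Z x \<partial>M)"
    proof (rule nn_integral_less)
      show "\<not> (AE x in M. indicator E x * ?Z x \<le> ennreal c * indicator E x)"
        by (fact not_AE)
      show "(\<integral>\<^sup>+x. ennreal c * indicator E x \<partial>M) \<noteq> \<infinity>"
        using emeasure_finite[of E] by (simp add: const_int ennreal_mult_eq_top_iff)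
      show "AE x in M. ennreal c * indicator E x \<le> indicator E x * ?Z x"
        by (intro AE_I2) (auto simp: E_def indicator_def less_imp_le)
    qed measurable
    also have "\<dots> = (\<integral>\<^sup>+x. indicator E x * Y x \<partial>M)"
      using E_F by (intro nn_cond_exp_intg) simp_all
    also have "\<dots> \<le> ennreal c * emeasure M E"
      by (rule bound[OF E_F])
    finally show False
      by (simp add: const_int)
  qed
  then show ?thesis
    by (rule AE_mp) (auto intro!: AE_I2 simp: E_def indicator_def not_less split: if_splits)
qed

lemma esssup_nn_cond_exp_le:
  assumes "finite_measure M"
    and bound: "\<And>E. subalgebra M F \<Longrightarrow> E \<in> sets F \<Longrightarrow>
      (\<integral>\<^sup>+x. indicator E x * Y x \<partial>M) \<le> ennreal c * emeasure M E"
  shows "esssup M (nn_cond_exp M F Y) \<le> ennreal c"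
proof (cases "Y \<in> borel_measurable M \<and> subalgebra M F")
  case True
  then have "sigma_finite_subalgebra M F"
    using assms(1) finite_measure_subalgebra_is_sigma_finite
    by (auto simp: finite_measure_subalgebra_def finite_measure_subalgebra_axioms_def)
  then have "AE x in M. nn_cond_exp M F Y x \<le> ennreal c"
    using True bound by (intro sigma_finite_subalgebra.AE_nn_cond_exp_le_const assms(1)) auto
  then show ?thesis
    by (intro esssup_I) simp_all
next
  case False
  then have "nn_cond_exp M F Y = (\<lambda>_. 0)"
    unfolding nn_cond_exp_def by (simp only: if_False)
  then show ?thesis
    by (intro esssup_I) auto
qed

section \<open>Stochastic dominance\<close>

lemma nn_integral_layer_cake:
  fixes \<phi> :: "'a \<Rightarrow> real"
  assumes "sigma_finite_measure N" and [measurable]: "\<phi> \<in> borel_measurable N"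
    and nonneg: "\<And>y. 0 \<le> \<phi> y"
  shows "(\<integral>\<^sup>+y. ennreal (\<phi> y) \<partial>N)
    = (\<integral>\<^sup>+t. indicator {0..} t * emeasure N {y \<in> space N. t < \<phi> y} \<partial>lborel)"
proof -
  interpret N: sigma_finite_measure N by fact
  interpret pair_sigma_finite N lborel ..
  have meas: "(\<lambda>(y, t). indicator {0..<\<phi> y} t :: ennreal) \<in> borel_measurable (N \<Otimes>\<^sub>M lborel)"
    by (simp add: split_beta' indicator_def of_bool_def) measurable
  have "(\<integral>\<^sup>+y. ennreal (\<phi> y) \<partial>N) = (\<integral>\<^sup>+y. (\<integral>\<^sup>+t. indicator {0..<\<phi> y} t \<partial>lborel) \<partial>N)"
    using nonneg by (intro nn_integral_cong) simp
  also have "\<dots> = (\<integral>\<^sup>+t. (\<integral>\<^sup>+y. indicator {0..<\<phi> y} t \<partial>N) \<partial>lborel)"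
    using Fubini'[OF meas] by simp
  also have "\<dots> = (\<integral>\<^sup>+t. indicator {0..} t * emeasure N {y \<in> space N. t < \<phi> y} \<partial>lborel)"
  proof (intro nn_integral_cong)
    fix t :: real
    have level_eq: "{y. t < \<phi> y} \<inter> space N = {y \<in> space N. t < \<phi> y}"
      by auto
    have "{y \<in> space N. t < \<phi> y} \<in> sets N"
      by measurable
    moreover have "(\<lambda>y. indicator {0..<\<phi> y} t :: ennreal)
        = (\<lambda>y. indicator {0..} t * indicator {y. t < \<phi> y} y)"
      by (auto simp: fun_eq_iff indicator_def)
    ultimately show "(\<integral>\<^sup>+y. indicator {0..<\<phi> y} t \<partial>N)
        = indicator {0..} t * emeasure N {y \<in> space N. t < \<phi> y}"
      by (simp add: nn_integral_cmult nn_integral_indicator' level_eq)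
  qed
  finally show ?thesis .
qed

lemma integrable_comp_le_quadratic:
  fixes l :: "'a \<Rightarrow> real" and \<psi> :: "real \<Rightarrow> real"
  assumes "finite_measure N" and [measurable]: "l \<in> borel_measurable N" "\<psi> \<in> borel_measurable borel"
    and "integrable N (\<lambda>y. (l y)\<^sup>2)" and "\<And>z. \<bar>\<psi> z\<bar> \<le> K + z\<^sup>2"
  shows "integrable N (\<lambda>y. \<psi> (l y))"
proof (rule Bochner_Integration.integrable_bound[where f="\<lambda>y. K + (l y)\<^sup>2"])
  interpret finite_measure N by fact
  show "integrable N (\<lambda>y. K + (l y)\<^sup>2)"
    using assms(4) by simp
  show "AE y in N. norm (\<psi> (l y)) \<le> norm (K + (l y)\<^sup>2)"
    using assms(5) by (intro AE_I2) (auto intro: order.trans[OF _ abs_ge_self])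
qed measurable

lemma integrable_min_const_of_square:
  fixes l :: "'a \<Rightarrow> real"
  assumes "finite_measure N" "l \<in> borel_measurable N" "integrable N (\<lambda>y. (l y)\<^sup>2)" "0 \<le> L"
  shows "integrable N (\<lambda>y. min (l y) L)" and "integrable N (\<lambda>y. (min (l y) L)\<^sup>2)"
proof -
  have "\<bar>min z L\<bar> \<le> (L + 1) + z\<^sup>2" for z :: real
  proof -
    have "\<bar>z\<bar> \<le> 1 + z\<^sup>2"
      using sum_power2_ge_zero[of "\<bar>z\<bar> - 1" 0] by (simp add: power2_diff)
    then show ?thesis
      using \<open>0 \<le> L\<close> by (auto simp: abs_le_iff min_def)
  qed
  then show "integrable N (\<lambda>y. min (l y) L)"
    by (intro integrable_comp_le_quadratic[OF assms(1,2) _ assms(3)]) simp_all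
  have "\<bar>(min z L)\<^sup>2\<bar> \<le> L\<^sup>2 + z\<^sup>2" for z :: real
    using \<open>0 \<le> L\<close> by (cases "z \<le> L") (simp_all add: min_def)
  then show "integrable N (\<lambda>y. (min (l y) L)\<^sup>2)"
    by (intro integrable_comp_le_quadratic[OF assms(1,2) _ assms(3)]) simp_all
qed

lemma integral_min_const_ge:
  fixes l :: "'a \<Rightarrow> real"
  assumes "prob_space N" and int1: "integrable N l" and int2: "integrable N (\<lambda>y. (l y)\<^sup>2)" and "0 < L"
  shows "(\<integral>y. l y \<partial>N) - (\<integral>y. (l y)\<^sup>2 \<partial>N) / L \<le> (\<integral>y. min (l y) L \<partial>N)"
proof -
  interpret prob_space N by fact
  have pointwise: "l y - (l y)\<^sup>2 / L \<le> min (l y) L" for y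
  proof (cases "l y \<le> L")
    case False
    then have "l y * 1 \<le> l y * (l y / L)"
      using \<open>0 < L\<close> by (intro mult_left_mono) auto
    then have "l y \<le> (l y)\<^sup>2 / L"
      by (simp add: power2_eq_square)
    then show ?thesis
      using False \<open>0 < L\<close> by simp
  qed (use \<open>0 < L\<close> in simp)
  have "integrable N (\<lambda>y. min (l y) L)"
    using int1 by (rule integrable_min) simp
  then have "(\<integral>y. l y - (l y)\<^sup>2 / L \<partial>N) \<le> (\<integral>y. min (l y) L \<partial>N)"
    using int1 int2 pointwise by (intro integral_mono) auto
  then show ?thesis
    using int1 int2 by simp
qed

lemma superlevel_neg_part_square:
  fixes t :: real
  assumes "0 \<le> t"
  shows "{z. t < (max (- z) 0)\<^sup>2} = {..<- sqrt t}"
proof -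
  have "t < (max (- z) 0)\<^sup>2 \<longleftrightarrow> z < - sqrt t" for z
  proof -
    have "t < (max (- z) 0)\<^sup>2 \<longleftrightarrow> sqrt t < sqrt ((max (- z) 0)\<^sup>2)"
      by (simp only: real_sqrt_less_iff)
    also have "sqrt ((max (- z) 0)\<^sup>2) = max (- z) 0"
      by simp
    also have "sqrt t < max (- z) 0 \<longleftrightarrow> z < - sqrt t"
      using real_sqrt_ge_zero[OF assms] by (smt (verit))
    finally show ?thesis .
  qed
  then show ?thesis
    by auto
qed

locale stoch_dominance =
  fixes Ng Nb :: "real measure" and l :: "real \<Rightarrow> real"
  assumes prob_Ng: "prob_space Ng" and sets_Ng: "sets Ng = sets borel"
    and prob_Nb: "prob_space Nb" and sets_Nb: "sets Nb = sets borel"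
    and measurable_l [measurable]: "l \<in> borel_measurable borel"
    and dominated: "\<And>t. measure Nb {x. t \<le> l x} \<le> measure Ng {x. t \<le> l x}"
begin

lemma measurable_l_Ng: "l \<in> borel_measurable Ng"
  and measurable_l_Nb: "l \<in> borel_measurable Nb"
  using sets_Ng sets_Nb by (auto cong: measurable_cong_sets)

lemma measure_less_dominated: "measure Ng {y. l y < s} \<le> measure Nb {y. l y < s}"
proof -
  interpret G: prob_space Ng by (rule prob_Ng)
  interpret B: prob_space Nb by (rule prob_Nb)
  have "{y. s \<le> l y} \<in> sets borel"
    by measurable
  then have "measure Ng (space Ng - {y. s \<le> l y}) \<le> measure Nb (space Nb - {y. s \<le> l y})"
    using dominated[of s] sets_Ng sets_Nb by (simp add: G.prob_compl B.prob_compl)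
  moreover have "space Ng - {y. s \<le> l y} = {y. l y < s}" "space Nb - {y. s \<le> l y} = {y. l y < s}"
    using sets_eq_imp_space_eq[OF sets_Ng] sets_eq_imp_space_eq[OF sets_Nb] by auto
  ultimately show ?thesis
    by simp
qed

lemma integral_antitone_dominated:
  fixes \<phi> :: "real \<Rightarrow> real"
  assumes [measurable]: "\<phi> \<in> borel_measurable borel" and nonneg: "\<And>z. 0 \<le> \<phi> z"
    and superlevel: "\<And>t. 0 \<le> t \<Longrightarrow> \<exists>s. {z. t < \<phi> z} = {..<s}"
    and int_g: "integrable Ng (\<lambda>y. \<phi> (l y))" and int_b: "integrable Nb (\<lambda>y. \<phi> (l y))"
  shows "(\<integral>y. \<phi> (l y) \<partial>Ng) \<le> (\<integral>y. \<phi> (l y) \<partial>Nb)"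
proof -
  interpret G: prob_space Ng by (rule prob_Ng)
  interpret B: prob_space Nb by (rule prob_Nb)
  have [simp]: "space Ng = UNIV" "space Nb = UNIV"
    using sets_eq_imp_space_eq[OF sets_Ng] sets_eq_imp_space_eq[OF sets_Nb] by auto
  have meas_g: "(\<lambda>y. \<phi> (l y)) \<in> borel_measurable Ng" and meas_b: "(\<lambda>y. \<phi> (l y)) \<in> borel_measurable Nb"
    using sets_Ng sets_Nb by (auto cong: measurable_cong_sets)
  have level: "emeasure Ng {y. t < \<phi> (l y)} \<le> emeasure Nb {y. t < \<phi> (l y)}" if t: "0 \<le> t" for t
  proof -
    obtain s where "{z. t < \<phi> z} = {..<s}"
      using superlevel[OF t] by blast
    then have "{y. t < \<phi> (l y)} = {y. l y < s}"
      by auto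
    then show ?thesis
      using measure_less_dominated[of s] by (simp add: G.emeasure_eq_measure B.emeasure_eq_measure)
  qed
  have "(\<integral>\<^sup>+y. ennreal (\<phi> (l y)) \<partial>Ng) \<le> (\<integral>\<^sup>+y. ennreal (\<phi> (l y)) \<partial>Nb)"
    unfolding nn_integral_layer_cake[OF G.sigma_finite_measure_axioms meas_g nonneg]
      nn_integral_layer_cake[OF B.sigma_finite_measure_axioms meas_b nonneg]
    by (intro nn_integral_mono) (auto simp: indicator_def intro: level)
  then show ?thesis
    using int_g int_b nonneg
    by (simp add: nn_integral_eq_integral integral_nonneg_AE ennreal_le_iff)
qed

lemma integral_min_dominated:
  assumes "0 \<le> L" and sq_g: "integrable Ng (\<lambda>y. (l y)\<^sup>2)" and sq_b: "integrable Nb (\<lambda>y. (l y)\<^sup>2)"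
  shows "(\<integral>y. min (l y) L \<partial>Nb) \<le> (\<integral>y. min (l y) L \<partial>Ng)"
proof -
  interpret G: prob_space Ng by (rule prob_Ng)
  interpret B: prob_space Nb by (rule prob_Nb)
  let ?\<phi> = "\<lambda>z. max (L - z) 0"
  have bound: "\<bar>?\<phi> z\<bar> \<le> (L + 1) + z\<^sup>2" for z :: real
  proof -
    have "\<bar>z\<bar> \<le> 1 + z\<^sup>2"
      using sum_power2_ge_zero[of "\<bar>z\<bar> - 1" 0] by (simp add: power2_diff)
    then show ?thesis
      using \<open>0 \<le> L\<close> by (auto simp: abs_le_iff max_def)
  qed
  have int_g: "integrable Ng (\<lambda>y. ?\<phi> (l y))"
    by (rule integrable_comp_le_quadratic[OF G.finite_measure_axioms measurable_l_Ng _ sq_g bound])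
      measurable
  have int_b: "integrable Nb (\<lambda>y. ?\<phi> (l y))"
    by (rule integrable_comp_le_quadratic[OF B.finite_measure_axioms measurable_l_Nb _ sq_b bound])
      measurable
  have "(\<integral>y. ?\<phi> (l y) \<partial>Ng) \<le> (\<integral>y. ?\<phi> (l y) \<partial>Nb)"
  proof (rule integral_antitone_dominated[OF _ _ _ int_g int_b])
    show "\<exists>s. {z. t < ?\<phi> z} = {..<s}" if "0 \<le> t" for t
      using that by (intro exI[of _ "L - t"]) (auto simp: max_def)
  qed auto
  moreover have "min (l y) L = L - ?\<phi> (l y)" for y
    by (simp add: max_def min_def)
  ultimately show ?thesis
    using int_g int_b by (simp add: G.prob_space B.prob_space)
qed

lemma integral_min_square_dominated:
  assumes "0 \<le> L" and sq_g: "integrable Ng (\<lambda>y. (l y)\<^sup>2)" and sq_b: "integrable Nb (\<lambda>y. (l y)\<^sup>2)"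
  shows "(\<integral>y. (min (l y) L)\<^sup>2 \<partial>Ng) \<le> L\<^sup>2 + (\<integral>y. (l y)\<^sup>2 \<partial>Nb)"
proof -
  interpret G: prob_space Ng by (rule prob_Ng)
  interpret B: prob_space Nb by (rule prob_Nb)
  let ?\<phi> = "\<lambda>z. (max (- z) 0)\<^sup>2"
  have neg_part_le: "?\<phi> z \<le> z\<^sup>2" for z :: real
    by (cases "z \<le> 0") simp_all
  have min_le: "(min z L)\<^sup>2 \<le> L\<^sup>2 + ?\<phi> z" for z :: real
  proof (cases "0 \<le> z")
    case True
    then have "(min z L)\<^sup>2 \<le> L\<^sup>2"
      using \<open>0 \<le> L\<close> by (intro power_mono) auto
    then show ?thesis
      by (simp add: add_increasing2)
  qed (use \<open>0 \<le> L\<close> in simp)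
  have bound: "\<bar>?\<phi> z\<bar> \<le> L\<^sup>2 + z\<^sup>2" for z :: real
    using neg_part_le[of z] by (simp add: add_increasing)
  have int_g: "integrable Ng (\<lambda>y. ?\<phi> (l y))"
    by (rule integrable_comp_le_quadratic[OF G.finite_measure_axioms measurable_l_Ng _ sq_g bound])
      measurable
  have int_b: "integrable Nb (\<lambda>y. ?\<phi> (l y))"
    by (rule integrable_comp_le_quadratic[OF B.finite_measure_axioms measurable_l_Nb _ sq_b bound])
      measurable
  have int_min: "integrable Ng (\<lambda>y. (min (l y) L)\<^sup>2)"
    by (rule integrable_min_const_of_square(2)[OF G.finite_measure_axioms measurable_l_Ng sq_g \<open>0 \<le> L\<close>])
  have "(\<integral>y. (min (l y) L)\<^sup>2 \<partial>Ng) \<le> (\<integral>y. L\<^sup>2 + ?\<phi> (l y) \<partial>Ng)"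
    using int_min int_g min_le by (intro integral_mono) simp_all
  also have "\<dots> = L\<^sup>2 + (\<integral>y. ?\<phi> (l y) \<partial>Ng)"
    using int_g by (simp add: G.prob_space)
  also have "(\<integral>y. ?\<phi> (l y) \<partial>Ng) \<le> (\<integral>y. ?\<phi> (l y) \<partial>Nb)"
    using superlevel_neg_part_square by (intro integral_antitone_dominated[OF _ _ _ int_g int_b]) auto
  also have "\<dots> \<le> (\<integral>y. (l y)\<^sup>2 \<partial>Nb)"
    using int_b sq_b neg_part_le by (intro integral_mono) simp_all
  finally show ?thesis
    by simp
qed

lemma measure_less_neg_dominated:
  assumes "0 < d" and sq_b: "integrable Nb (\<lambda>y. (l y)\<^sup>2)"
  shows "measure Ng {y. l y < - d} \<le> (\<integral>y. (l y)\<^sup>2 \<partial>Nb) / d\<^sup>2"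
proof -
  interpret B: prob_space Nb by (rule prob_Nb)
  have "measure Nb {y \<in> space Nb. d \<le> \<bar>l y\<bar>} \<le> (\<integral>y. (l y)\<^sup>2 \<partial>Nb) / d\<^sup>2"
    using measurable_l_Nb sq_b \<open>0 < d\<close> by (intro B.second_moment_method) auto
  moreover have "measure Nb {y. l y < - d} \<le> measure Nb {y \<in> space Nb. d \<le> \<bar>l y\<bar>}"
  proof (rule B.finite_measure_mono)
    show "{y. l y < - d} \<subseteq> {y \<in> space Nb. d \<le> \<bar>l y\<bar>}"
      using sets_eq_imp_space_eq[OF sets_Nb] by auto
    show "{y \<in> space Nb. d \<le> \<bar>l y\<bar>} \<in> sets Nb"
      using measurable_l_Nb by measurable
  qed
  ultimately show ?thesis
    using measure_less_dominated[of "- d"] by linarith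
qed

end

section \<open>A Lyapunov function for the statistic\<close>

definition lyap_obs :: "real \<Rightarrow> real \<Rightarrow> real \<Rightarrow> real \<Rightarrow> real" where
  "lyap_obs a gam B y = y / a - gam * (max (B - y) 0)\<^sup>2"

lemma lyap_obs_mono:
  assumes "0 < a" "0 \<le> gam" "y \<le> z"
  shows "lyap_obs a gam B y \<le> lyap_obs a gam B z"
proof -
  have "(max (B - z) 0)\<^sup>2 \<le> (max (B - y) 0)\<^sup>2"
    using assms by (intro power_mono) auto
  then have "gam * (max (B - z) 0)\<^sup>2 \<le> gam * (max (B - y) 0)\<^sup>2"
    using assms by (intro mult_left_mono) auto
  moreover have "y / a \<le> z / a"
    using assms by (simp add: divide_right_mono)
  ultimately show ?thesis
    unfolding lyap_obs_def by linarith
qed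

lemma lyap_obs_le: "0 \<le> gam \<Longrightarrow> lyap_obs a gam B y \<le> y / a"
  unfolding lyap_obs_def by simp

lemma lyap_obs_ge:
  assumes "0 < a" "0 \<le> gam" "0 \<le> B" "0 \<le> y"
  shows "- gam * B\<^sup>2 \<le> lyap_obs a gam B y"
  using lyap_obs_mono[OF assms(1,2,4), of B] assms(3) by (simp add: lyap_obs_def)

lemma lyap_obs_neg_le:
  assumes "0 < a" "0 \<le> gam" "0 \<le> B" "y < 0"
  shows "lyap_obs a gam B y \<le> - gam * B\<^sup>2"
proof -
  have "gam * B\<^sup>2 \<le> gam * (max (B - y) 0)\<^sup>2"
    using assms by (intro mult_left_mono power_mono) auto
  moreover have "y / a < 0"
    using assms by (simp add: divide_neg_pos)
  ultimately show ?thesis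
    unfolding lyap_obs_def by linarith
qed

lemma lyap_obs_add_ge:
  assumes "0 \<le> gam"
  shows "lyap_obs a gam B d + (1 / a + 2 * gam * max (B - d) 0) * t - gam * t\<^sup>2
    \<le> lyap_obs a gam B (d + t)"
proof -
  have "(max (B - d - t) 0)\<^sup>2 \<le> (max (B - d) 0 - t)\<^sup>2"
  proof (cases "B - d - t \<le> 0 \<or> 0 \<le> B - d")
    case False
    then have "(B - d - t)\<^sup>2 \<le> (- t)\<^sup>2"
      by (intro power_mono) auto
    then show ?thesis
      using False by simp
  qed (auto simp: max_def)
  then have "gam * (max (B - d - t) 0)\<^sup>2 \<le> gam * (max (B - d) 0 - t)\<^sup>2"
    using assms by (rule mult_left_mono)
  moreover have "(max (B - d) 0 - t)\<^sup>2 = (max (B - d) 0)\<^sup>2 - 2 * max (B - d) 0 * t + t\<^sup>2"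
    by (simp add: power2_diff)
  ultimately show ?thesis
    unfolding lyap_obs_def by (simp add: algebra_simps add_divide_distrib)
qed

definition lyap :: "real \<Rightarrow> real \<Rightarrow> real \<Rightarrow> real \<Rightarrow> real \<Rightarrow> real \<Rightarrow> real \<Rightarrow> real" where
  "lyap a gam B mu h U y =
     (if y < 0 then - gam * B\<^sup>2 - 1 + max y (- h) / mu else lyap_obs a gam B (min y U))"

lemma measurable_lyap [measurable]: "lyap a gam B mu h U \<in> borel_measurable borel"
  unfolding lyap_def lyap_obs_def by measurable

context
  fixes a gam B mu h :: real
  assumes a_pos: "0 < a" and gam_nonneg: "0 \<le> gam" and B_nonneg: "0 \<le> B"
    and mu_pos: "0 < mu" and h_nonneg: "0 \<le> h"
begin

lemma lyap_bounds:
  assumes "0 \<le> U"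
  shows "- gam * B\<^sup>2 - (1 + h / mu) \<le> lyap a gam B mu h U y" and "lyap a gam B mu h U y \<le> U / a"
proof -
  have "- gam * B\<^sup>2 - (1 + h / mu) \<le> lyap a gam B mu h U y \<and> lyap a gam B mu h U y \<le> U / a"
  proof (cases "y < 0")
    case True
    have "(- h) / mu \<le> max y (- h) / mu"
      using mu_pos by (intro divide_right_mono) simp_all
    moreover have "max y (- h) / mu \<le> 0"
      using True h_nonneg mu_pos by (simp add: divide_nonpos_pos)
    moreover have "0 \<le> gam * B\<^sup>2" "0 \<le> U / a"
      using gam_nonneg a_pos assms by simp_all
    ultimately show ?thesis
      using True by (simp add: lyap_def)
  next
    case False
    have "lyap_obs a gam B (min y U) \<le> min y U / a"
      by (rule lyap_obs_le[OF gam_nonneg])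
    also have "\<dots> \<le> U / a"
      using a_pos by (simp add: divide_right_mono)
    finally have "lyap_obs a gam B (min y U) \<le> U / a" .
    moreover have "- gam * B\<^sup>2 \<le> lyap_obs a gam B (min y U)"
      using False assms by (intro lyap_obs_ge a_pos gam_nonneg B_nonneg) simp
    moreover have "0 \<le> h / mu"
      using h_nonneg mu_pos by simp
    ultimately show ?thesis
      using False by (simp add: lyap_def)
  qed
  then show "- gam * B\<^sup>2 - (1 + h / mu) \<le> lyap a gam B mu h U y" "lyap a gam B mu h U y \<le> U / a"
    by simp_all
qed

lemma lyap_skip:
  assumes "0 \<le> U" "- h \<le> d" "d < 0"
  shows "lyap a gam B mu h U d + 1 \<le> lyap a gam B mu h U (min (d + mu) 0)"
proof (cases "d + mu < 0")
  case True
  then show ?thesis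
    using assms mu_pos by (simp add: lyap_def add_divide_distrib)
next
  case False
  have "d / mu \<le> 0"
    using assms mu_pos by (simp add: divide_le_0_iff)
  then show ?thesis
    using False assms B_nonneg by (simp add: lyap_def lyap_obs_def)
qed

lemma lyap_step_ge:
  assumes "0 \<le> L" "0 \<le> d" "d < A"
  shows "lyap_obs a gam B d + (1 / a + 2 * gam * max (B - d) 0) * min z L - gam * (min z L)\<^sup>2
      - (1 + h / mu) * indicator {..<- d} z
    \<le> lyap a gam B mu h (A + L) (max (d + z) (- h))"
proof (cases "0 \<le> d + min z L")
  case True
  then have "max (d + z) (- h) = d + z" "\<not> d + z < 0"
    using h_nonneg by auto
  moreover have "lyap_obs a gam B (d + min z L) \<le> lyap_obs a gam B (min (d + z) (A + L))"
    using assms by (intro lyap_obs_mono a_pos gam_nonneg) auto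
  moreover have "0 \<le> (1 + h / mu) * indicator {..<- d} z"
    using h_nonneg mu_pos by simp
  ultimately show ?thesis
    using lyap_obs_add_ge[OF gam_nonneg, of a B d "min z L"] by (simp add: lyap_def)
next
  case False
  then have "z < - d"
    using assms by linarith
  have "lyap_obs a gam B (d + min z L) \<le> - gam * B\<^sup>2"
    using False by (intro lyap_obs_neg_le a_pos gam_nonneg B_nonneg) simp
  moreover have "- gam * B\<^sup>2 - (1 + h / mu) \<le> lyap a gam B mu h (A + L) (max (d + z) (- h))"
    using assms by (intro lyap_bounds(1)) simp
  ultimately show ?thesis
    using \<open>z < - d\<close> lyap_obs_add_ge[OF gam_nonneg, of a B d "min z L"] by simp
qed

lemma integral_lyap_step_ge:
  fixes N :: "real measure" and l :: "real \<Rightarrow> real"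
  assumes prob_N: "prob_space N" and sets_N: "sets N = sets borel"
    and [measurable]: "l \<in> borel_measurable borel" and sq: "integrable N (\<lambda>y. (l y)\<^sup>2)"
    and "0 \<le> L" "0 \<le> d" "d < A"
  shows "lyap_obs a gam B d + (1 / a + 2 * gam * max (B - d) 0) * (\<integral>y. min (l y) L \<partial>N)
      - gam * (\<integral>y. (min (l y) L)\<^sup>2 \<partial>N) - (1 + h / mu) * measure N {y. l y < - d}
    \<le> (\<integral>y. lyap a gam B mu h (A + L) (max (d + l y) (- h)) \<partial>N)"
proof -
  interpret N: prob_space N by (rule prob_N)
  let ?c = "1 / a + 2 * gam * max (B - d) 0" and ?C = "1 + h / mu"
  have l_N [measurable]: "l \<in> borel_measurable N"
    using sets_N by (simp cong: measurable_cong_sets)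
  have int_min: "integrable N (\<lambda>y. min (l y) L)" and int_sq: "integrable N (\<lambda>y. (min (l y) L)\<^sup>2)"
    using integrable_min_const_of_square[OF N.finite_measure_axioms l_N sq \<open>0 \<le> L\<close>] by simp_all
  have sets_tail [measurable]: "{y. l y < - d} \<in> sets N"
  proof -
    have "{y \<in> space N. l y < - d} \<in> sets N"
      by measurable
    then show ?thesis
      using sets_eq_imp_space_eq[OF sets_N] by simp
  qed
  have int_ind: "integrable N (indicator {y. l y < - d} :: real \<Rightarrow> real)"
    using N.emeasure_finite[of "{y. l y < - d}"]
    by (intro integrable_real_indicator sets_tail) (simp add: less_top[symmetric])
  have "\<bar>lyap a gam B mu h (A + L) z\<bar> \<le> (A + L) / a + gam * B\<^sup>2 + ?C" for z
  proof -
    have "0 \<le> A + L"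
      using assms by simp
    moreover have "0 \<le> (A + L) / a" "0 \<le> gam * B\<^sup>2" "0 \<le> ?C"
      using assms gam_nonneg a_pos h_nonneg mu_pos by simp_all
    ultimately show ?thesis
      using lyap_bounds[of "A + L" z] unfolding abs_le_iff by linarith
  qed
  then have int_lyap: "integrable N (\<lambda>y. lyap a gam B mu h (A + L) (max (d + l y) (- h)))"
    by (intro N.integrable_const_bound AE_I2) simp_all
  have "(\<integral>y. lyap_obs a gam B d + ?c * min (l y) L - gam * (min (l y) L)\<^sup>2
        - ?C * indicator {y. l y < - d} y \<partial>N)
      \<le> (\<integral>y. lyap a gam B mu h (A + L) (max (d + l y) (- h)) \<partial>N)"
  proof (rule integral_mono[OF _ int_lyap])
    show "integrable N (\<lambda>y. lyap_obs a gam B d + ?c * min (l y) L - gam * (min (l y) L)\<^sup>2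
        - ?C * indicator {y. l y < - d} y)"
      using int_min int_sq int_ind by simp
    show "lyap_obs a gam B d + ?c * min (l y) L - gam * (min (l y) L)\<^sup>2 - ?C * indicator {y. l y < - d} y
        \<le> lyap a gam B mu h (A + L) (max (d + l y) (- h))" for y
      using lyap_step_ge[OF assms(5-7), of "l y"] by (simp add: indicator_def)
  qed
  then show ?thesis
    using int_min int_sq int_ind sets_tail by (simp add: N.prob_space)
qed

lemma lyap_drift_obs:
  fixes N :: "real measure" and l :: "real \<Rightarrow> real"
  assumes prob_N: "prob_space N" and sets_N: "sets N = sets borel"
    and l: "l \<in> borel_measurable borel" and sq: "integrable N (\<lambda>y. (l y)\<^sup>2)"
    and "0 < B" "0 \<le> L" "0 \<le> d" "d < A"
    and mean: "0 \<le> m" "m \<le> (\<integral>y. min (l y) L \<partial>N)"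
    and second: "(\<integral>y. (min (l y) L)\<^sup>2 \<partial>N) \<le> S"
    and tail: "\<And>t. 0 < t \<Longrightarrow> measure N {y. l y < - t} \<le> V / t\<^sup>2" and "0 \<le> V"
    and near: "1 \<le> m / a + gam * B * m - gam * S - (1 + h / mu)"
    and far: "1 \<le> m / a - gam * S - (1 + h / mu) * (4 * V / B\<^sup>2)"
  shows "lyap_obs a gam B d + 1 \<le> (\<integral>y. lyap a gam B mu h (A + L) (max (d + l y) (- h)) \<partial>N)"
proof -
  interpret N: prob_space N by (rule prob_N)
  let ?c = "1 / a + 2 * gam * max (B - d) 0" and ?C = "1 + h / mu" and ?p = "measure N {y. l y < - d}"
  have "0 \<le> ?c" "0 \<le> ?C"
    using a_pos gam_nonneg h_nonneg mu_pos by simp_all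
  have "?c * m \<le> ?c * (\<integral>y. min (l y) L \<partial>N)"
    using mean(2) \<open>0 \<le> ?c\<close> by (rule mult_left_mono)
  moreover have "gam * (\<integral>y. (min (l y) L)\<^sup>2 \<partial>N) \<le> gam * S"
    using second gam_nonneg by (rule mult_left_mono)
  ultimately have "lyap_obs a gam B d + ?c * m - gam * S - ?C * ?p
      \<le> (\<integral>y. lyap a gam B mu h (A + L) (max (d + l y) (- h)) \<partial>N)"
    using integral_lyap_step_ge[OF prob_N sets_N l sq assms(6-8)] by linarith
  \<comment> \<open>Near 0 the quadratic penalty supplies the drift; far from 0 the tail bound does.\<close>
  moreover have "?c * m - gam * S - ?C * ?p \<ge> 1"
  proof (cases "d \<le> B / 2")
    case True
    then have "B \<le> 2 * max (B - d) 0"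
      by (auto simp: max_def)
    then have "gam * B * m \<le> gam * (2 * max (B - d) 0) * m"
      using gam_nonneg mean by (intro mult_right_mono mult_left_mono) auto
    moreover have "?C * ?p \<le> ?C"
      using \<open>0 \<le> ?C\<close> by (simp add: mult_left_le)
    ultimately show ?thesis
      using near by (simp add: distrib_right mult.assoc)
  next
    case False
    then have "0 < d" "B\<^sup>2 / 4 \<le> d\<^sup>2"
      using \<open>0 < B\<close> power_mono[of "B / 2" d 2] by (auto simp: power_divide)
    then have "V / d\<^sup>2 \<le> V / (B\<^sup>2 / 4)"
      using \<open>0 \<le> V\<close> \<open>0 < B\<close> by (intro divide_left_mono) auto
    then have "?p \<le> 4 * V / B\<^sup>2"
      using tail[OF \<open>0 < d\<close>] by (simp add: mult.commute)
    then have "?C * ?p \<le> ?C * (4 * V / B\<^sup>2)"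
      using \<open>0 \<le> ?C\<close> by (rule mult_left_mono)
    moreover have "m / a \<le> ?c * m"
      using gam_nonneg mean by (simp add: distrib_right)
    ultimately show ?thesis
      using far by simp
  qed
  ultimately show ?thesis
    by simp
qed

end

lemma (in stoch_dominance) lyap_drift_dominated:
  assumes sq_g: "integrable Ng (\<lambda>y. (l y)\<^sup>2)" and sq_b: "integrable Nb (\<lambda>y. (l y)\<^sup>2)"
    and "0 < a" "0 \<le> gam" "0 < B" "0 < L" "0 < mu" "0 \<le> h" "0 \<le> d" "d < A"
    and m: "0 \<le> m" "m \<le> (\<integral>y. l y \<partial>Nb) - (\<integral>y. (l y)\<^sup>2 \<partial>Nb) / L"
    and near: "1 \<le> m / a + gam * B * m - gam * (L\<^sup>2 + (\<integral>y. (l y)\<^sup>2 \<partial>Nb)) - (1 + h / mu)"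
    and far: "1 \<le> m / a - gam * (L\<^sup>2 + (\<integral>y. (l y)\<^sup>2 \<partial>Nb)) - (1 + h / mu) * (4 * (\<integral>y. (l y)\<^sup>2 \<partial>Nb) / B\<^sup>2)"
  shows "lyap_obs a gam B d + 1 \<le> (\<integral>y. lyap a gam B mu h (A + L) (max (d + l y) (- h)) \<partial>Ng)"
proof -
  interpret B: prob_space Nb by (rule prob_Nb)
  have "integrable Nb l"
    using measurable_l_Nb sq_b by (rule B.square_integrable_imp_integrable)
  then have "m \<le> (\<integral>y. min (l y) L \<partial>Nb)"
    using integral_min_const_ge[OF prob_Nb _ sq_b \<open>0 < L\<close>] m(2) by linarith
  also have "\<dots> \<le> (\<integral>y. min (l y) L \<partial>Ng)"
    using \<open>0 < L\<close> sq_g sq_b by (intro integral_min_dominated) simp_all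
  finally have mean: "m \<le> (\<integral>y. min (l y) L \<partial>Ng)" .
  show ?thesis
  proof (rule lyap_drift_obs[OF _ _ _ _ _ prob_Ng sets_Ng measurable_l sq_g _ _ _ _ m(1) mean])
    show "(\<integral>y. (min (l y) L)\<^sup>2 \<partial>Ng) \<le> L\<^sup>2 + (\<integral>y. (l y)\<^sup>2 \<partial>Nb)"
      using \<open>0 < L\<close> sq_g sq_b by (intro integral_min_square_dominated) simp_all
    show "measure Ng {y. l y < - t} \<le> (\<integral>y. (l y)\<^sup>2 \<partial>Nb) / t\<^sup>2" if "0 < t" for t
      using that sq_b by (rule measure_less_neg_dominated)
    show "0 \<le> (\<integral>y. (l y)\<^sup>2 \<partial>Nb)"
      by (intro integral_nonneg_AE) simp
  qed (use assms in simp_all)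
qed

section \<open>Choice of the parameters\<close>

lemma eventually_affine_le_at_top:
  fixes p q r :: real
  assumes "p < q"
  shows "\<forall>\<^sub>F x in at_top. p * x + r \<le> q * x"
  using eventually_ge_at_top[of "r / (q - p)"]
proof eventually_elim
  case (elim x)
  then have "r \<le> (q - p) * x"
    using assms by (simp add: divide_le_eq mult.commute)
  then show ?case
    by (simp add: algebra_simps)
qed

lemma truncation_parameters_exist:
  fixes \<epsilon> KL V :: real
  assumes "0 < \<epsilon>" "0 < KL" "0 \<le> V"
  obtains L a where "0 < L" "0 < a" "0 < KL - V / L" "(KL - V / L) / a = 1 + \<epsilon> / 2"
    and "1 / a < (1 + \<epsilon>) / KL"
proof -
  define \<theta> where "\<theta> = KL * (1 + \<epsilon> / 2) / (1 + \<epsilon>)"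
  define L where "L = V / (KL - \<theta>) + 1"
  define a where "a = (KL - V / L) / (1 + \<epsilon> / 2)"
  have "0 < \<theta>"
    unfolding \<theta>_def using assms by (intro divide_pos_pos mult_pos_pos) auto
  moreover have "\<theta> < KL"
    unfolding \<theta>_def using assms by (simp add: field_simps)
  ultimately have \<theta>: "0 < \<theta>" "\<theta> < KL" .
  have "0 \<le> V / (KL - \<theta>)"
    using assms \<theta> by simp
  then have L: "0 < L"
    by (simp add: L_def)
  have "(KL - \<theta>) * L = V + (KL - \<theta>)"
    using \<theta> by (simp add: L_def field_simps)
  then have "V / L < KL - \<theta>"
    using L \<theta> by (simp add: divide_less_eq)
  then have m: "\<theta> < KL - V / L"
    by simp
  then have a: "0 < a" "(KL - V / L) / a = 1 + \<epsilon> / 2"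
    using \<theta> assms by (simp_all add: a_def)
  have "1 / a = (1 + \<epsilon> / 2) / (KL - V / L)"
    by (simp add: a_def)
  also have "\<dots> < (1 + \<epsilon> / 2) / \<theta>"
    using m \<theta> assms by (intro divide_strict_left_mono) auto
  also have "\<dots> = (1 + \<epsilon>) / KL"
  proof -
    have "(1 + \<epsilon>) * \<theta> = (1 + \<epsilon> / 2) * KL"
      using assms by (simp add: \<theta>_def)
    then show ?thesis
      using \<theta>(1) assms(2) by (simp add: frac_eq_eq)
  qed
  finally show thesis
    using that L a m \<theta> by simp
qed

lemma penalty_parameters_exist:
  fixes m a \<delta> S C V :: real
  assumes "0 < m" "0 < \<delta>" "m / a = 1 + \<delta>" "0 < S" "0 \<le> C" "0 \<le> V"
  obtains gam B where "0 < gam" "0 < B"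
    and "1 \<le> m / a + gam * B * m - gam * S - C"
    and "1 \<le> m / a - gam * S - C * (4 * V / B\<^sup>2)"
proof -
  define gam where "gam = \<delta> / (2 * S)"
  define B where "B = (\<delta> / 2 + C) / (gam * m) + 8 * C * V / \<delta> + 1"
  have gam: "0 < gam" "gam * S = \<delta> / 2"
    using assms by (simp_all add: gam_def)
  then have "0 \<le> (\<delta> / 2 + C) / (gam * m)" "0 \<le> 8 * C * V / \<delta>"
    using assms by simp_all
  then have B: "1 \<le> B" "8 * C * V / \<delta> \<le> B"
    by (simp_all add: B_def)
  have "gam * B * m = (\<delta> / 2 + C) + gam * m * (8 * C * V / \<delta> + 1)"
    using gam(1) assms(1) by (simp add: B_def field_simps)
  moreover have "0 \<le> gam * m * (8 * C * V / \<delta> + 1)"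
    using gam assms by simp
  ultimately have near: "1 \<le> m / a + gam * B * m - gam * S - C"
    using assms(2,3) gam(2) by linarith
  have "8 * C * V \<le> \<delta> * B"
    using B(2) assms(2) by (simp add: pos_divide_le_eq mult.commute)
  also have "\<dots> \<le> \<delta> * B\<^sup>2"
    using B(1) assms(2) by (intro mult_left_mono) (simp_all add: power2_eq_square)
  finally have "C * (4 * V / B\<^sup>2) \<le> \<delta> / 2"
    using B by (simp add: field_simps)
  then have far: "1 \<le> m / a - gam * S - C * (4 * V / B\<^sup>2)"
    using assms(3) gam(2) by linarith
  show thesis
    by (rule that[OF gam(1) _ near far]) (use B(1) in simp)
qed

lemma drift_parameters_exist:
  fixes \<epsilon> KL V C :: real
  assumes "0 < \<epsilon>" "0 < KL" "0 \<le> V" "0 \<le> C"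
  obtains L a gam B where "0 < L" "0 < a" "0 < gam" "0 < B" "0 < KL - V / L"
    and "1 \<le> (KL - V / L) / a + gam * B * (KL - V / L) - gam * (L\<^sup>2 + V) - C"
    and "1 \<le> (KL - V / L) / a - gam * (L\<^sup>2 + V) - C * (4 * V / B\<^sup>2)"
    and "\<forall>\<^sub>F A in at_top. (A + L) / a + gam * B\<^sup>2 + C \<le> A / KL * (1 + \<epsilon>)"
proof -
  obtain L a where L: "0 < L" "0 < a" "0 < KL - V / L" "(KL - V / L) / a = 1 + \<epsilon> / 2"
    and a: "1 / a < (1 + \<epsilon>) / KL"
    using truncation_parameters_exist[OF assms(1-3)] .
  moreover have "0 < L\<^sup>2 + V"
    using L(1) assms(3) by (simp add: add_pos_nonneg)
  ultimately obtain gam B where "0 < gam" "0 < B"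
    and "1 \<le> (KL - V / L) / a + gam * B * (KL - V / L) - gam * (L\<^sup>2 + V) - C"
    and "1 \<le> (KL - V / L) / a - gam * (L\<^sup>2 + V) - C * (4 * V / B\<^sup>2)"
    using penalty_parameters_exist[of "KL - V / L" "\<epsilon> / 2" a "L\<^sup>2 + V" C V] assms by auto
  moreover have "\<forall>\<^sub>F A in at_top. (A + L) / a + gam * B\<^sup>2 + C \<le> A / KL * (1 + \<epsilon>)"
    using eventually_affine_le_at_top[OF a, of "L / a + gam * B\<^sup>2 + C"]
  proof eventually_elim
    case (elim A)
    have "(A + L) / a + gam * B\<^sup>2 + C = 1 / a * A + (L / a + gam * B\<^sup>2 + C)"
      by (simp add: add_divide_distrib)
    also have "\<dots> \<le> (1 + \<epsilon>) / KL * A"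
      by (fact elim)
    finally show ?case
      by (simp add: mult.commute)
  qed
  ultimately show thesis
    using that L by blast
qed

section \<open>The RDE-CUSUM statistic\<close>

lemma rdc_D_ge: "0 \<le> h \<Longrightarrow> 0 \<le> mu \<Longrightarrow> - h \<le> rdc_D gb f mu h x n"
  by (induction n) auto

lemma rdc_D_prefix: "(\<forall>i<n. x i = x' i) \<Longrightarrow> rdc_D gb f mu h x n = rdc_D gb f mu h x' n"
  by (induction n) auto

lemma measurable_rdc_D:
  assumes "\<And>i. sets (M i) = sets (borel :: real measure)"
    and [measurable]: "llr gb f \<in> borel_measurable borel"
  shows "(\<lambda>x. rdc_D gb f mu h x n) \<in> borel_measurable (PiM UNIV M)"
proof (induction n)
  case (Suc n)
  have [measurable]: "(\<lambda>x. x n) \<in> borel_measurable (PiM UNIV M)"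
    using measurable_component_singleton[of n UNIV M] assms(1) by (simp cong: measurable_cong_sets)
  note Suc [measurable]
  show ?case
    by simp measurable
qed simp

lemma prefix_determined_info_alg:
  assumes "space P = UNIV" and "E \<in> sets (info_alg P gb f mu h m)"
  shows "prefix_determined m E"
proof -
  have "rdc_info gb f mu h m \<in> space P \<rightarrow> space info_space"
    by (simp add: info_space_def space_PiM space_pair_measure)
  then obtain S where E: "E = rdc_info gb f mu h m -` S \<inter> space P"
    using assms(2) unfolding info_alg_def by (auto simp: sets_vimage_algebra2)
  show ?thesis
    unfolding prefix_determined_def
  proof (intro allI impI)
    fix x x' :: "nat \<Rightarrow> real"
    assume "\<forall>i<m. x i = x' i"
    then have "rdc_info gb f mu h m x = rdc_info gb f mu h m x'"
      using rdc_D_prefix[of _ x x' gb f mu h] by (auto simp: rdc_info_def rdc_M_def fun_eq_iff)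
    then show "x \<in> E \<longleftrightarrow> x' \<in> E"
      by (simp add: E assms(1))
  qed
qed

lemma of_nat_le_suminf_indicator:
  assumes "\<And>n. n < N \<Longrightarrow> P n"
  shows "of_nat (N - j) \<le> (\<Sum>n. if j \<le> n \<and> P n then 1 else 0 :: ennreal)"
proof -
  have "(\<Sum>n\<in>{j..<N}. if j \<le> n \<and> P n then 1 else 0 :: ennreal) = (\<Sum>n\<in>{j..<N}. 1)"
    using assms by (intro sum.cong) auto
  then have "of_nat (N - j) = (\<Sum>n\<in>{j..<N}. if j \<le> n \<and> P n then 1 else 0 :: ennreal)"
    by simp
  also have "\<dots> \<le> (\<Sum>n. if j \<le> n \<and> P n then 1 else 0)"
    by (rule sum_le_suminf) (auto intro: summableI)
  finally show ?thesis .
qed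

lemma rdc_D_mem_if_below:
  assumes "0 < A" "0 \<le> h" "0 \<le> mu" and below: "\<forall>m. 1 \<le> m \<and> m \<le> n \<longrightarrow> rdc_D gb f mu h x m < A"
  shows "\<forall>m\<le>n. rdc_D gb f mu h x m \<in> {- h..<A}"
proof (intro allI impI)
  fix m
  assume "m \<le> n"
  then have "rdc_D gb f mu h x m < A"
    using below assms(1) by (cases m) auto
  then show "rdc_D gb f mu h x m \<in> {- h..<A}"
    using rdc_D_ge[OF assms(2,3)] by simp
qed

lemma delay_rdc_tau_le_count:
  assumes "1 \<le> k" "0 < A" "0 \<le> h" "0 \<le> mu"
  shows "delay (rdc_tau gb f A mu h x) k
    \<le> (\<Sum>n. if k - 1 \<le> n \<and> (\<forall>m\<le>n. rdc_D gb f mu h x m \<in> {- h..<A}) then 1 else 0 :: ennreal)"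
    (is "_ \<le> suminf ?w")
proof -
  note count = of_nat_le_suminf_indicator[where j="k - 1"
      and P="\<lambda>n. \<forall>m\<le>n. rdc_D gb f mu h x m \<in> {- h..<A}"]
  note alive = rdc_D_mem_if_below[OF assms(2-4)]
  show ?thesis
  proof (cases "\<exists>n\<ge>1. A \<le> rdc_D gb f mu h x n")
    case True
    define s where "s = (LEAST n. 1 \<le> n \<and> A \<le> rdc_D gb f mu h x n)"
    have "rdc_D gb f mu h x m < A" if "1 \<le> m" "m < s" for m
      using that not_less_Least[of m "\<lambda>n. 1 \<le> n \<and> A \<le> rdc_D gb f mu h x n"] by (auto simp: s_def)
    then have "of_nat (s - (k - 1)) \<le> suminf ?w"
      by (intro count alive) auto
    moreover have "rdc_tau gb f A mu h x = enat s"
      using True unfolding rdc_tau_def s_def by simp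
    then have "delay (rdc_tau gb f A mu h x) k = of_nat (s - (k - 1))"
      using assms(1) by (simp add: delay_def)
    ultimately show ?thesis
      by simp
  next
    case False
    then have "rdc_D gb f mu h x m < A" if "1 \<le> m" for m
      using that not_le by blast
    then have "\<forall>m\<le>n. rdc_D gb f mu h x m \<in> {- h..<A}" for n
      by (intro alive) simp
    then have "of_nat N \<le> suminf ?w" for N
      using count[of "k - 1 + N"] by simp
    then have "(SUP N. of_nat N :: ennreal) \<le> suminf ?w"
      by (intro SUP_least)
    then show ?thesis
      by (simp add: ennreal_SUP_of_nat_eq_top top_unique)
  qed
qed

definition rdc_step :: "(real \<Rightarrow> real) \<Rightarrow> real \<Rightarrow> real \<Rightarrow> real \<Rightarrow> real \<Rightarrow> real" where
  "rdc_step l mu h d y = (if 0 \<le> d then max (d + l y) (- h) else min (d + mu) 0)"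

lemma rdc_D_Suc_step:
  "rdc_D gb f mu h x (Suc n) = rdc_step (llr gb f) mu h (rdc_D gb f mu h x n) (x n)"
  by (simp add: rdc_step_def)

lemma measurable_rdc_step:
  assumes "sets N = sets borel" and [measurable]: "l \<in> borel_measurable borel"
  shows "(\<lambda>(d, y). rdc_step l mu h d y) \<in> borel_measurable (borel \<Otimes>\<^sub>M N)"
proof -
  have sets_eq: "sets (borel \<Otimes>\<^sub>M N) = sets (borel \<Otimes>\<^sub>M borel)"
    using assms(1) by (intro sets_pair_measure_cong) simp_all
  have "(\<lambda>(d, y). rdc_step l mu h d y) \<in> borel_measurable (borel \<Otimes>\<^sub>M borel)"
    unfolding rdc_step_def by (simp add: split_beta') measurable
  then show ?thesis
    by (subst measurable_cong_sets[OF sets_eq refl])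
qed

lemma prob_space_law: "is_density g \<Longrightarrow> prob_space (law g)"
  unfolding is_density_def law_def
  by (intro prob_spaceI) (auto simp: emeasure_density)

lemma measurable_llr:
  assumes "is_density f" "is_density gb"
  shows "llr gb f \<in> borel_measurable borel"
proof -
  have [measurable]: "f \<in> borel_measurable borel" "gb \<in> borel_measurable borel"
    using assms by (simp_all add: is_density_def)
  show ?thesis
    unfolding llr_def by measurable
qed

context
  fixes f gb g :: "real \<Rightarrow> real" and a gam B L mu h A :: real
  assumes prob_f: "prob_space (law f)" and prob_g: "prob_space (law g)"
    and measurable_llr [measurable]: "llr gb f \<in> borel_measurable borel"
    and a_pos: "0 < a" and gam_nonneg: "0 \<le> gam" and B_nonneg: "0 \<le> B" and L_nonneg: "0 \<le> L"
    and mu_pos: "0 < mu" and h_nonneg: "0 \<le> h" and A_pos: "0 < A"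
    and drift_obs: "\<And>d. 0 \<le> d \<Longrightarrow> d < A \<Longrightarrow>
      lyap_obs a gam B d + 1 \<le> (\<integral>y. lyap a gam B mu h (A + L) (max (d + llr gb f y) (- h)) \<partial>law g)"
begin

lemma rdc_product_drift:
  assumes "1 \<le> k"
  shows "product_drift (\<lambda>i. if i + 1 < k then law f else law g) (law g) (k - 1) (rdc_D gb f mu h)
    (rdc_step (llr gb f) mu h) (lyap a gam B mu h (A + L)) (- gam * B\<^sup>2 - (1 + h / mu)) ((A + L) / a)
    {- h..<A}"
proof -
  let ?M = "\<lambda>i. if i + 1 < k then law f else law g"
  let ?V = "lyap a gam B mu h (A + L)"
  have prob_M: "prob_space (?M i)" for i
    using prob_f prob_g by simp
  have M_eq: "?M i = law g" if "k - 1 \<le> i" for i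
  proof -
    have "\<not> i + 1 < k"
      using that by linarith
    then show ?thesis
      by simp
  qed
  have measurable_D: "(\<lambda>x. rdc_D gb f mu h x n) \<in> borel_measurable (PiM UNIV ?M)" for n
    by (rule measurable_rdc_D) (simp_all add: law_def)
  have measurable_T: "(\<lambda>(d, y). rdc_step (llr gb f) mu h d y) \<in> borel_measurable (borel \<Otimes>\<^sub>M law g)"
    by (rule measurable_rdc_step) (simp_all add: law_def)
  have V_bounds: "- gam * B\<^sup>2 - (1 + h / mu) \<le> ?V d" "?V d \<le> (A + L) / a" for d
    using lyap_bounds[OF a_pos gam_nonneg B_nonneg mu_pos h_nonneg, of "A + L" d] A_pos L_nonneg by simp_all
  have drift: "?V d + 1 \<le> (\<integral>y. ?V (rdc_step (llr gb f) mu h d y) \<partial>law g)" if "d \<in> {- h..<A}" for d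
  proof (cases "d < 0")
    case True
    then show ?thesis
      using that A_pos L_nonneg lyap_skip[OF a_pos gam_nonneg B_nonneg mu_pos h_nonneg, of "A + L" d]
        prob_space.prob_space[OF prob_g]
      by (simp add: rdc_step_def)
  next
    case False
    then have "?V d = lyap_obs a gam B d"
      using that L_nonneg by (simp add: lyap_def)
    then show ?thesis
      using False that drift_obs[of d] by (simp add: rdc_step_def)
  qed
  show ?thesis
    by (rule product_drift.intro[OF prob_M M_eq measurable_D rdc_D_prefix rdc_D_Suc_step measurable_T
          measurable_lyap V_bounds _ drift]) measurable
qed

lemma esssup_cond_delay_le:
  assumes "1 \<le> k"
  shows "esssup (Pk f g k) (nn_cond_exp (Pk f g k) (info_alg (Pk f g k) gb f mu h (k - 1))
      (\<lambda>x. delay (rdc_tau gb f A mu h x) k)) \<le> ennreal ((A + L) / a + gam * B\<^sup>2 + (1 + h / mu))"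
proof -
  interpret product_drift "\<lambda>i. if i + 1 < k then law f else law g" "law g" "k - 1" "rdc_D gb f mu h"
    "rdc_step (llr gb f) mu h" "lyap a gam B mu h (A + L)" "- gam * B\<^sup>2 - (1 + h / mu)" "(A + L) / a"
    "{- h..<A}"
    by (rule rdc_product_drift[OF assms])
  interpret P: prob_space P
    by (rule prob_space_P)
  have Pk: "Pk f g k = P"
    by (simp add: Pk_def)
  have "space (if i + 1 < k then law f else law g) = UNIV" for i
    by (simp add: law_def)
  then have "space P = UNIV"
    by (simp add: space_PiM)
  show ?thesis
  proof (rule esssup_nn_cond_exp_le)
    show "finite_measure (Pk f g k)"
      unfolding Pk by (rule P.finite_measure_axioms)
  next
    fix E
    assume "subalgebra (Pk f g k) (info_alg (Pk f g k) gb f mu h (k - 1))"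
      and E_info: "E \<in> sets (info_alg (Pk f g k) gb f mu h (k - 1))"
    then have E: "E \<in> sets P"
      by (auto simp: subalgebra_def Pk)
    have E_prefix: "prefix_determined (k - 1) E"
      using E_info \<open>space P = UNIV\<close> by (intro prefix_determined_info_alg) (simp_all add: Pk)
    have "(\<integral>\<^sup>+x. indicator E x * delay (rdc_tau gb f A mu h x) k \<partial>P)
        \<le> (\<integral>\<^sup>+x. indicator E x * (\<Sum>n. if k - 1 \<le> n \<and> x \<in> sojourn n then 1 else 0) \<partial>P)"
      using delay_rdc_tau_le_count[OF assms A_pos h_nonneg] mu_pos
      by (intro nn_integral_mono mult_left_mono) (simp_all add: sojourn_def)
    also have "\<dots> \<le> ennreal (((A + L) / a - (- gam * B\<^sup>2 - (1 + h / mu))) * measure P E)"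
      by (rule nn_integral_sojourn_count_le[OF E E_prefix])
    also have "\<dots> = ennreal ((A + L) / a + gam * B\<^sup>2 + (1 + h / mu)) * emeasure P E"
    proof -
      have range: "(A + L) / a - (- gam * B\<^sup>2 - (1 + h / mu)) = (A + L) / a + gam * B\<^sup>2 + (1 + h / mu)"
        by (simp add: algebra_simps)
      have "0 \<le> (A + L) / a + gam * B\<^sup>2 + (1 + h / mu)"
        using lo_le_hi by simp
      then show ?thesis
        unfolding range P.emeasure_eq_measure by (simp add: ennreal_mult)
    qed
    finally show "(\<integral>\<^sup>+x. indicator E x * delay (rdc_tau gb f A mu h x) k \<partial>Pk f g k)
        \<le> ennreal ((A + L) / a + gam * B\<^sup>2 + (1 + h / mu)) * emeasure (Pk f g k) E"
      by (simp add: Pk)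
  qed
qed

lemma WADD_rdc_le_lyap_range:
  "WADD_rdc f gb g A mu h \<le> ennreal ((A + L) / a + gam * B\<^sup>2 + (1 + h / mu))"
  unfolding WADD_rdc_def by (intro SUP_least esssup_cond_delay_le) simp

end

lemma WADD_rdc_le_dominated:
  fixes f gb g :: "real \<Rightarrow> real"
  assumes dens: "is_density f" "is_density g" "is_density gb"
    and dominated: "\<And>t. measure (law gb) {x. t \<le> llr gb f x} \<le> measure (law g) {x. t \<le> llr gb f x}"
    and sq_g: "integrable (law g) (\<lambda>x. (llr gb f x)\<^sup>2)"
    and sq_b: "integrable (law gb) (\<lambda>x. (llr gb f x)\<^sup>2)"
    and pos: "0 < a" "0 \<le> gam" "0 < B" "0 < L" "0 < mu" "0 \<le> h" "0 < A"
    and m: "0 \<le> m" "m \<le> (\<integral>x. llr gb f x \<partial>law gb) - (\<integral>x. (llr gb f x)\<^sup>2 \<partial>law gb) / L"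
    and near: "1 \<le> m / a + gam * B * m - gam * (L\<^sup>2 + (\<integral>x. (llr gb f x)\<^sup>2 \<partial>law gb)) - (1 + h / mu)"
    and far: "1 \<le> m / a - gam * (L\<^sup>2 + (\<integral>x. (llr gb f x)\<^sup>2 \<partial>law gb))
      - (1 + h / mu) * (4 * (\<integral>x. (llr gb f x)\<^sup>2 \<partial>law gb) / B\<^sup>2)"
  shows "WADD_rdc f gb g A mu h \<le> ennreal ((A + L) / a + gam * B\<^sup>2 + (1 + h / mu))"
proof (rule WADD_rdc_le_lyap_range)
  show llr: "llr gb f \<in> borel_measurable borel"
    using dens(1,3) by (rule measurable_llr)
  interpret stoch_dominance "law g" "law gb" "llr gb f"
    using dens dominated by (intro stoch_dominance.intro llr prob_space_law) (simp_all add: law_def)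
  show "lyap_obs a gam B d + 1 \<le> (\<integral>y. lyap a gam B mu h (A + L) (max (d + llr gb f y) (- h)) \<partial>law g)"
    if "0 \<le> d" "d < A" for d
    using sq_g sq_b pos(1-6) that m near far by (rule lyap_drift_dominated)
qed (use dens pos in \<open>simp_all add: prob_space_law\<close>)

theorem theorem3:
  fixes f gb :: "real \<Rightarrow> real" and \<G> :: "(real \<Rightarrow> real) set" and mu h :: real
  assumes f_dens: "is_density f"
    and G_dens: "\<forall>g\<in>\<G>. is_density g"
    and gb_in: "gb \<in> \<G>"
    and f_pos: "AE x in lborel. 0 < f x"
    and gb_pos: "AE x in lborel. 0 < gb x"
    and least_fav: "\<forall>g\<in>\<G>. \<forall>t::real.
        measure (law g) {x. llr gb f x \<ge> t} \<ge> measure (law gb) {x. llr gb f x \<ge> t}"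
    and cont_f: "\<forall>t::real. measure (law f) {x. llr gb f x = t} = 0"
    and cont_G: "\<forall>g\<in>\<G>. \<forall>t::real. measure (law g) {x. llr gb f x = t} = 0"
    and mom_f: "integrable (law f) (\<lambda>x. (llr gb f x)\<^sup>2)"
    and mom_G: "\<forall>g\<in>\<G>. integrable (law g) (\<lambda>x. (llr gb f x)\<^sup>2)"
    and KL_pos: "(\<integral>x. llr gb f x \<partial>law gb) > 0"
    and mu_pos: "mu > 0"
    and h_nonneg: "h \<ge> 0"
  shows "\<forall>\<epsilon>>0. \<forall>\<^sub>F A in at_top.
           (SUP g\<in>\<G>. WADD_rdc f gb g A mu h)
             \<le> ennreal (A / (\<integral>x. llr gb f x \<partial>law gb) * (1 + \<epsilon>))"
proof (intro allI impI)
  fix \<epsilon> :: real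
  assume "0 < \<epsilon>"
  let ?KL = "\<integral>x. llr gb f x \<partial>law gb" and ?V = "\<integral>x. (llr gb f x)\<^sup>2 \<partial>law gb"
  have "0 \<le> ?V" "0 \<le> 1 + h / mu"
    using mu_pos h_nonneg by (simp_all add: integral_nonneg_AE)
  then obtain L a gam B where params: "0 < L" "0 < a" "0 < gam" "0 < B" "0 < ?KL - ?V / L"
    and near: "1 \<le> (?KL - ?V / L) / a + gam * B * (?KL - ?V / L) - gam * (L\<^sup>2 + ?V) - (1 + h / mu)"
    and far: "1 \<le> (?KL - ?V / L) / a - gam * (L\<^sup>2 + ?V) - (1 + h / mu) * (4 * ?V / B\<^sup>2)"
    and range: "\<forall>\<^sub>F A in at_top. (A + L) / a + gam * B\<^sup>2 + (1 + h / mu) \<le> A / ?KL * (1 + \<epsilon>)"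
    using drift_parameters_exist[OF \<open>0 < \<epsilon>\<close> KL_pos] by blast
  have WADD_le: "WADD_rdc f gb g A mu h \<le> ennreal ((A + L) / a + gam * B\<^sup>2 + (1 + h / mu))"
    if "g \<in> \<G>" "0 < A" for g A
    using f_dens G_dens gb_in least_fav mom_G that params mu_pos h_nonneg near far
    by (intro WADD_rdc_le_dominated[where m = "?KL - ?V / L"]) simp_all
  show "\<forall>\<^sub>F A in at_top. (SUP g\<in>\<G>. WADD_rdc f gb g A mu h) \<le> ennreal (A / ?KL * (1 + \<epsilon>))"
    using range eventually_gt_at_top[of 0]
  proof eventually_elim
    case (elim A)
    have "(SUP g\<in>\<G>. WADD_rdc f gb g A mu h) \<le> ennreal ((A + L) / a + gam * B\<^sup>2 + (1 + h / mu))"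
      using WADD_le \<open>0 < A\<close> by (intro SUP_least)
    also have "\<dots> \<le> ennreal (A / ?KL * (1 + \<epsilon>))"
      using elim by (intro ennreal_leI)
    finally show ?case .
  qed
qed

end
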